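(* Let $\mathcal{X}$ be a fuzzy random variable with values in $\mathcal{F}_c(\mathbb{R})$ such that $\mathrm{E}[\|\mathcal{X}_0\|]<\infty$. Then $\mathrm{Med}_1(\mathcal{X})=\mathrm{Med}_s(\mathcal{X})$; that is, a fuzzy set $U\in\mathcal{F}_c(\mathbb{R})$ minimizes $\mathrm{E}[\rho_1(U,\mathcal{X})]$ over $\mathcal{F}_c(\mathbb{R})$ if and only if $s_U(u,\alpha)$ is a median of the real random variable $s_{\mathcal{X}}(u,\alpha)$ for every $u\in\{-1,1\}$ and every $\alpha\in[0,1]$.
   Context: $\mathcal{F}_c(\mathbb{R})$ is the set of functions $A:\mathbb{R}\to[0,1]$ whose $\alpha$-levels $A_\alpha=\{x:A(x)\ge\alpha\}$ ($\alpha\in(0,1]$) and $A_0=\overline{\{x:A(x)>0\}}$ are non-empty compact intervals. Support function: $s_A(u,\alpha)=\sup\{uv:v\in A_\alpha\}$, $u\in\{-1,1\}$, $\alpha\in[0,1]$. A fuzzy random variable on $(\Omega,\mathcal{A},\mathbb{P})$ is a map $\mathcal{X}:\Omega\to\mathcal{F}_c(\mathbb{R})$ with each $\omega\mapsto\mathcal{X}(\omega)_\alpha$ a random compact set; $s_{\mathcal{X}}(u,\alpha)(\omega)=s_{\mathcal{X}(\omega)}(u,\alpha)$ is then a real random variable; $\|\mathcal{X}_0\|=\sup\{|x|:x\in\mathcal{X}(\cdot)_0\}$. $\rho_1(A,B)=\int_{\{-1,1\}}\int_0^1|s_A(u,\alpha)-s_B(u,\alpha)|\,d\alpha\,d\mathcal{V}(u)$,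 $\mathcal{V}$ uniform on $\{-1,1\}$. $\mathrm{Med}_1(\mathcal{X})=\arg\min_{U\in\mathcal{F}_c(\mathbb{R})}\mathrm{E}[\rho_1(U,\mathcal{X})]$. For a real random variable $X$, $\mathrm{Med}(X)$ is the set of all its medians. $\mathrm{Med}_s(\mathcal{X})$ (support medians) is the set of $A\in\mathcal{F}_c(\mathbb{R})$ with $s_A(u,\alpha)\in\mathrm{Med}(s_{\mathcal{X}}(u,\alpha))$ for all $u\in\{-1,1\}$, $\alpha\in[0,1]$. *)

theory Defs
  imports "HOL-Probability.Probability"
begin

text \<open>Fuzzy sets on the reals are membership functions real \<Rightarrow> real.\<close>

definition is_compact_interval :: "real set \<Rightarrow> bool" where
  "is_compact_interval S \<longleftrightarrow> (\<exists>a b. a \<le> b \<and> S = {a..b})"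

definition flevel :: "(real \<Rightarrow> real) \<Rightarrow> real \<Rightarrow> real set" where
  "flevel A \<alpha> = (if \<alpha> = 0 then closure {x. A x > 0} else {x. \<alpha> \<le> A x})"

definition Fc :: "(real \<Rightarrow> real) set" where
  "Fc = {A. (\<forall>x. 0 \<le> A x \<and> A x \<le> 1) \<and> (\<forall>\<alpha>\<in>{0..1}. is_compact_interval (flevel A \<alpha>))}"

definition supp_fun :: "(real \<Rightarrow> real) \<Rightarrow> real \<Rightarrow> real \<Rightarrow> real" where
  "supp_fun A u \<alpha> = Sup ((\<lambda>v. u * v) ` flevel A \<alpha>)"

definition random_compact_set :: "'a measure \<Rightarrow> ('a \<Rightarrow> real set) \<Rightarrow> bool" where
  "random_compact_set M K \<longleftrightarrow>
     (\<forall>\<omega>\<in>space M. compact (K \<omega>) \<and> K \<omega> \<noteq> {}) \<and>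
     (\<forall>C. compact C \<longrightarrow> {\<omega>\<in>space M. K \<omega> \<inter> C \<noteq> {}} \<in> sets M)"

definition fuzzy_random_variable :: "'a measure \<Rightarrow> ('a \<Rightarrow> real \<Rightarrow> real) \<Rightarrow> bool" where
  "fuzzy_random_variable M X \<longleftrightarrow>
     (\<forall>\<omega>\<in>space M. X \<omega> \<in> Fc) \<and>
     (\<forall>\<alpha>\<in>{0..1}. random_compact_set M (\<lambda>\<omega>. flevel (X \<omega>) \<alpha>))"

definition norm0 :: "(real \<Rightarrow> real) \<Rightarrow> real" where
  "norm0 A = Sup (abs ` flevel A 0)"

text \<open>rho_1 metric, V uniform on {-1,1}.\<close>
definition rho1 :: "(real \<Rightarrow> real) \<Rightarrow> (real \<Rightarrow> real) \<Rightarrow> real" where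
  "rho1 A B = (\<Sum>u\<in>{-1, 1::real}. (1/2) *
      (LBINT \<alpha>=0..1. \<bar>supp_fun A u \<alpha> - supp_fun B u \<alpha>\<bar>))"

definition Med1 :: "'a measure \<Rightarrow> ('a \<Rightarrow> real \<Rightarrow> real) \<Rightarrow> (real \<Rightarrow> real) set" where
  "Med1 M X = {U \<in> Fc. \<forall>V\<in>Fc.
      (\<integral>\<^sup>+\<omega>. ennreal (rho1 U (X \<omega>)) \<partial>M) \<le> (\<integral>\<^sup>+\<omega>. ennreal (rho1 V (X \<omega>)) \<partial>M)}"

definition Med :: "'a measure \<Rightarrow> ('a \<Rightarrow> real) \<Rightarrow> real set" where
  "Med M Y = {m. measure M {\<omega>\<in>space M. Y \<omega> \<le> m} \<ge> 1/2 \<and>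
                 measure M {\<omega>\<in>space M. Y \<omega> \<ge> m} \<ge> 1/2}"

definition Meds :: "'a measure \<Rightarrow> ('a \<Rightarrow> real \<Rightarrow> real) \<Rightarrow> (real \<Rightarrow> real) set" where
  "Meds M X = {A \<in> Fc. \<forall>u\<in>{-1, 1}. \<forall>\<alpha>\<in>{0..1}.
      supp_fun A u \<alpha> \<in> Med M (\<lambda>\<omega>. supp_fun (X \<omega>) u \<alpha>)}"

end

(*
  Both sides are characterised pointwise in (u, alpha). By Fubini, E[rho_1(U, X)] is the average
  over u = -1, 1 of the integral over alpha in (0,1] of E|s_U(u,alpha) - s_X(u,alpha)|, and a real
  number c minimises E|c - Y| exactly when c is a median of Y. Hence a support median minimises every
  integrand, and thus the objective.

  Conversely, the largest medians of s_X(u,alpha) are monotone and left-continuous in alpha, so they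
  are the support functions of a fuzzy set W, which attains the pointwise minimum of the integrands.
  A minimiser U has the same finite alpha-integral as W for each u, so s_U(u,alpha) is a median for
  almost every alpha. Medians are stable under pointwise limits and support functions are continuous
  along the levels, so this holds for every alpha.
*)

theory Submission
  imports Defs
begin

section \<open>Level sets and support functions\<close>

lemma flevel_compact_nonempty:
  assumes "A \<in> Fc" "\<alpha> \<in> {0..1}"
  shows "compact (flevel A \<alpha>)" "flevel A \<alpha> \<noteq> {}"
proof -
  obtain a b where "a \<le> b" "flevel A \<alpha> = {a..b}"
    using assms unfolding Fc_def is_compact_interval_def by blast
  then show "compact (flevel A \<alpha>)" "flevel A \<alpha> \<noteq> {}"
    by auto
qed

lemma flevel_antimono:
  assumes "0 \<le> \<alpha>" "\<alpha> \<le> \<beta>"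
  shows "flevel A \<beta> \<subseteq> flevel A \<alpha>"
proof (cases "\<alpha> = 0")
  case True
  have "{x. \<beta> \<le> A x} \<subseteq> closure {x. 0 < A x}" if "\<beta> \<noteq> 0"
    using that assms closure_subset by fastforce
  then show ?thesis
    using True by (auto simp: flevel_def)
next
  case False
  then show ?thesis
    using assms by (auto simp: flevel_def)
qed

lemma Sup_scaled_compact_ge_iff:
  fixes K :: "real set"
  assumes "compact K" "K \<noteq> {}"
  shows "c \<le> Sup ((\<lambda>v. u * v) ` K) \<longleftrightarrow> (\<exists>v\<in>K. c \<le> u * v)"
proof -
  have "compact ((\<lambda>v. u * v) ` K)"
    by (intro compact_continuous_image continuous_intros assms)
  then obtain s where s: "s \<in> (\<lambda>v. u * v) ` K" "\<forall>t\<in>(\<lambda>v. u * v) ` K. t \<le> s"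
    using compact_attains_sup assms(2) by blast
  then have "Sup ((\<lambda>v. u * v) ` K) = s"
    by (intro cSup_eq_maximum) auto
  then show ?thesis
    using s by auto
qed

lemma supp_fun_ge_iff:
  assumes "A \<in> Fc" "\<alpha> \<in> {0..1}"
  shows "c \<le> supp_fun A u \<alpha> \<longleftrightarrow> (\<exists>v\<in>flevel A \<alpha>. c \<le> u * v)"
  unfolding supp_fun_def using Sup_scaled_compact_ge_iff flevel_compact_nonempty[OF assms] by blast

lemma supp_fun_upper:
  assumes "A \<in> Fc" "\<alpha> \<in> {0..1}" "v \<in> flevel A \<alpha>"
  shows "u * v \<le> supp_fun A u \<alpha>"
  using supp_fun_ge_iff[OF assms(1,2)] assms(3) by blast

lemma supp_fun_attained:
  assumes "A \<in> Fc" "\<alpha> \<in> {0..1}"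
  obtains v where "v \<in> flevel A \<alpha>" "supp_fun A u \<alpha> = u * v"
proof -
  obtain v where "v \<in> flevel A \<alpha>" "supp_fun A u \<alpha> \<le> u * v"
    using supp_fun_ge_iff[OF assms] by blast
  then show thesis
    using that supp_fun_upper[OF assms] by (meson order_antisym)
qed

lemma supp_fun_antimono:
  assumes "A \<in> Fc" "0 \<le> \<alpha>" "\<alpha> \<le> \<beta>" "\<beta> \<le> 1"
  shows "supp_fun A u \<beta> \<le> supp_fun A u \<alpha>"
proof -
  have "\<beta> \<in> {0..1}" "\<alpha> \<in> {0..1}"
    using assms by auto
  then obtain v where v: "v \<in> flevel A \<beta>" "supp_fun A u \<beta> = u * v"
    using supp_fun_attained[OF assms(1)] by metis
  then have "v \<in> flevel A \<alpha>"
    using flevel_antimono assms by blast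
  then show ?thesis
    using supp_fun_upper[OF assms(1) \<open>\<alpha> \<in> {0..1}\<close>] v(2) by simp
qed

lemma supp_fun_left_limit:
  assumes A: "A \<in> Fc" and \<alpha>: "\<alpha> \<in> {0<..1}"
    and c: "\<And>\<beta>. \<beta> \<in> {0<..<\<alpha>} \<Longrightarrow> c \<le> supp_fun A u \<beta>"
  shows "c \<le> supp_fun A u \<alpha>"
proof -
  define H where "H = {v. c \<le> u * v}"
  let ?F = "(\<lambda>\<beta>. flevel A \<beta> \<inter> H) ` {0<..<\<alpha>}"
  have "\<Inter> ?F \<noteq> {}"
  proof (rule compact_chain)
    have "closed H"
      unfolding H_def by (intro closed_Collect_le continuous_intros)
    then show "compact S" if "S \<in> ?F" for S
      using that flevel_compact_nonempty(1)[OF A] \<alpha> by (auto intro: compact_Int_closed)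
    show "{} \<notin> ?F"
      using c supp_fun_ge_iff[OF A] \<alpha> by (fastforce simp: H_def)
    show "S \<subseteq> T \<or> T \<subseteq> S" if ST: "S \<in> ?F \<and> T \<in> ?F" for S T
    proof -
      obtain \<beta> \<gamma> where "\<beta> \<in> {0<..<\<alpha>}" "\<gamma> \<in> {0<..<\<alpha>}" "S = flevel A \<beta> \<inter> H" "T = flevel A \<gamma> \<inter> H"
        using ST by blast
      then show ?thesis
        using flevel_antimono[of \<beta> \<gamma> A] flevel_antimono[of \<gamma> \<beta> A] by (cases "\<beta> \<le> \<gamma>") auto
    qed
  qed
  then obtain v where v: "\<And>\<beta>. \<beta> \<in> {0<..<\<alpha>} \<Longrightarrow> v \<in> flevel A \<beta> \<inter> H"
    by blast
  have "c \<le> u * v"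
    using v[of "\<alpha> / 2"] \<alpha> by (auto simp: H_def)
  have "\<alpha> \<le> A v"
    by (rule dense_le_bounded[of 0]) (use \<alpha> v in \<open>auto simp: flevel_def\<close>)
  then have "v \<in> flevel A \<alpha>"
    using \<alpha> by (simp add: flevel_def)
  then have "u * v \<le> supp_fun A u \<alpha>"
    using \<alpha> by (intro supp_fun_upper[OF A]) auto
  with \<open>c \<le> u * v\<close> show ?thesis
    by (rule order_trans)
qed

lemma supp_fun_right_limit_0:
  assumes A: "A \<in> Fc" and c: "c < supp_fun A u 0"
  shows "\<exists>\<beta>\<in>{0<..1}. c < supp_fun A u \<beta>"
proof -
  obtain v where v: "v \<in> flevel A 0" "supp_fun A u 0 = u * v"
    using supp_fun_attained[OF A, of 0 u] by auto
  have "open {v. c < u * v}"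
    by (intro open_Collect_less continuous_intros)
  moreover have "v \<in> {v. c < u * v} \<inter> closure {x. 0 < A x}"
    using v c by (simp add: flevel_def)
  ultimately have "{v. c < u * v} \<inter> {x. 0 < A x} \<noteq> {}"
    using open_Int_closure_eq_empty by blast
  then obtain x where x: "0 < A x" "c < u * x"
    by blast
  have "A x \<le> 1"
    using A by (simp add: Fc_def)
  have "u * x \<le> supp_fun A u (A x)"
    using x \<open>A x \<le> 1\<close> by (intro supp_fun_upper[OF A]) (simp_all add: flevel_def)
  then show ?thesis
    using x \<open>A x \<le> 1\<close> by (intro bexI[of _ "A x"]) simp_all
qed

lemma antimono_continuous_at_left:
  fixes f :: "real \<Rightarrow> real"
  assumes "a < \<alpha>"
    and mono: "\<And>\<beta> \<gamma>. a < \<beta> \<Longrightarrow> \<beta> \<le> \<gamma> \<Longrightarrow> \<gamma> \<le> \<alpha> \<Longrightarrow> f \<gamma> \<le> f \<beta>"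
    and lim: "\<And>c. (\<And>\<beta>. \<beta> \<in> {a<..<\<alpha>} \<Longrightarrow> c \<le> f \<beta>) \<Longrightarrow> c \<le> f \<alpha>"
  shows "continuous (at_left \<alpha>) f"
  unfolding continuous_within
proof (rule order_tendstoI)
  fix y assume "y < f \<alpha>"
  from eventually_at_left_real[OF \<open>a < \<alpha>\<close>]
  show "eventually (\<lambda>\<beta>. y < f \<beta>) (at_left \<alpha>)"
    by eventually_elim (use mono[of _ \<alpha>] \<open>y < f \<alpha>\<close> in force)
next
  fix y assume "f \<alpha> < y"
  then obtain \<beta>\<^sub>0 where \<beta>\<^sub>0: "\<beta>\<^sub>0 \<in> {a<..<\<alpha>}" "f \<beta>\<^sub>0 < y"
    using lim[of y] by force
  then have "eventually (\<lambda>\<beta>. \<beta> \<in> {\<beta>\<^sub>0<..<\<alpha>}) (at_left \<alpha>)"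
    by (intro eventually_at_left_real) auto
  then show "eventually (\<lambda>\<beta>. f \<beta> < y) (at_left \<alpha>)"
    by eventually_elim (meson \<beta>\<^sub>0 mono[of \<beta>\<^sub>0] greaterThanLessThan_iff le_less_trans less_imp_le)
qed

lemma antimono_continuous_at_right:
  fixes f :: "real \<Rightarrow> real"
  assumes mono: "\<And>\<beta> \<gamma>. \<alpha> \<le> \<beta> \<Longrightarrow> \<beta> \<le> \<gamma> \<Longrightarrow> \<gamma> \<le> b \<Longrightarrow> f \<gamma> \<le> f \<beta>"
    and lim: "\<And>c. c < f \<alpha> \<Longrightarrow> \<exists>\<beta>\<in>{\<alpha><..b}. c < f \<beta>"
  shows "continuous (at_right \<alpha>) f"
  unfolding continuous_within
proof (rule order_tendstoI)
  fix y assume "y < f \<alpha>"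
  then obtain \<beta>\<^sub>0 where \<beta>\<^sub>0: "\<alpha> < \<beta>\<^sub>0" "\<beta>\<^sub>0 \<le> b" "y < f \<beta>\<^sub>0"
    using lim by force
  have "y < f \<beta>" if "\<beta> \<in> {\<alpha><..<\<beta>\<^sub>0}" for \<beta>
    using mono[of \<beta> \<beta>\<^sub>0] that \<beta>\<^sub>0 by simp
  with eventually_at_right_real[OF \<open>\<alpha> < \<beta>\<^sub>0\<close>]
  show "eventually (\<lambda>\<beta>. y < f \<beta>) (at_right \<alpha>)"
    by (rule eventually_mono)
next
  fix y assume "f \<alpha> < y"
  obtain \<beta>\<^sub>0 where \<beta>\<^sub>0: "\<alpha> < \<beta>\<^sub>0" "\<beta>\<^sub>0 \<le> b"
    using lim[of "f \<alpha> - 1"] by force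
  have "f \<beta> < y" if "\<beta> \<in> {\<alpha><..<\<beta>\<^sub>0}" for \<beta>
    using mono[of \<alpha> \<beta>] that \<beta>\<^sub>0 \<open>f \<alpha> < y\<close> by simp
  with eventually_at_right_real[OF \<open>\<alpha> < \<beta>\<^sub>0\<close>]
  show "eventually (\<lambda>\<beta>. f \<beta> < y) (at_right \<alpha>)"
    by (rule eventually_mono)
qed

lemma supp_fun_continuous_at_left:
  assumes "A \<in> Fc" "\<alpha> \<in> {0<..1}"
  shows "continuous (at_left \<alpha>) (supp_fun A u)"
proof (rule antimono_continuous_at_left[of 0])
  show "supp_fun A u \<gamma> \<le> supp_fun A u \<beta>" if "0 < \<beta>" "\<beta> \<le> \<gamma>" "\<gamma> \<le> \<alpha>" for \<beta> \<gamma>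
    using that assms by (intro supp_fun_antimono) auto
qed (use assms supp_fun_left_limit in auto)

lemma supp_fun_continuous_at_right_0:
  assumes "A \<in> Fc"
  shows "continuous (at_right 0) (supp_fun A u)"
proof (rule antimono_continuous_at_right[where b=1])
  show "supp_fun A u \<gamma> \<le> supp_fun A u \<beta>" if "0 \<le> \<beta>" "\<beta> \<le> \<gamma>" "\<gamma> \<le> 1" for \<beta> \<gamma>
    using that assms by (intro supp_fun_antimono) auto
qed (use assms supp_fun_right_limit_0 in auto)

lemma abs_supp_fun_le_norm0:
  assumes A: "A \<in> Fc" and u: "u \<in> {-1, 1}" and \<alpha>: "\<alpha> \<in> {0..1}"
  shows "\<bar>supp_fun A u \<alpha>\<bar> \<le> norm0 A"
proof -
  obtain v where v: "v \<in> flevel A \<alpha>" "supp_fun A u \<alpha> = u * v"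
    using supp_fun_attained[OF A \<alpha>] by blast
  have "compact (abs ` flevel A 0)"
    using flevel_compact_nonempty(1)[OF A, of 0] by (intro compact_continuous_image continuous_intros) auto
  then have "bdd_above (abs ` flevel A 0)"
    by (intro bounded_imp_bdd_above compact_imp_bounded)
  moreover have "v \<in> flevel A 0"
    using v(1) flevel_antimono[of 0 \<alpha> A] \<alpha> by auto
  ultimately have "\<bar>v\<bar> \<le> norm0 A"
    unfolding norm0_def by (intro cSup_upper) auto
  then show ?thesis
    using u v(2) by (auto simp: abs_mult)
qed

lemma supp_fun_interval:
  assumes "flevel A \<alpha> = {a..b}" "a \<le> b"
  shows "supp_fun A 1 \<alpha> = b" "supp_fun A (-1) \<alpha> = - a"
  using assms by (simp_all add: supp_fun_def image_uminus_atLeastAtMost)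

lemma supp_fun_lower_le_upper:
  assumes "A \<in> Fc" "\<alpha> \<in> {0..1}"
  shows "- supp_fun A (-1) \<alpha> \<le> supp_fun A 1 \<alpha>"
proof -
  obtain v where "v \<in> flevel A \<alpha>"
    using flevel_compact_nonempty(2)[OF assms] by blast
  then show ?thesis
    using supp_fun_upper[OF assms, of v 1] supp_fun_upper[OF assms, of v "-1"] by simp
qed

section \<open>Support functions of fuzzy random variables\<close>

lemma random_compact_set_hits_closed:
  assumes K: "random_compact_set M K" and F: "closed F"
  shows "{\<omega> \<in> space M. K \<omega> \<inter> F \<noteq> {}} \<in> sets M"
proof -
  have "{\<omega> \<in> space M. K \<omega> \<inter> F \<noteq> {}} = (\<Union>n::nat. {\<omega> \<in> space M. K \<omega> \<inter> (F \<inter> cball 0 n) \<noteq> {}})"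
  proof (intro subset_antisym subsetI)
    fix \<omega> assume "\<omega> \<in> {\<omega> \<in> space M. K \<omega> \<inter> F \<noteq> {}}"
    then obtain x where "\<omega> \<in> space M" "x \<in> K \<omega> \<inter> F"
      by blast
    moreover obtain n :: nat where "norm x \<le> n"
      using real_arch_simple by blast
    ultimately have "x \<in> K \<omega> \<inter> (F \<inter> cball 0 n)"
      by (auto simp: dist_norm)
    with \<open>\<omega> \<in> space M\<close> show "\<omega> \<in> (\<Union>n::nat. {\<omega> \<in> space M. K \<omega> \<inter> (F \<inter> cball 0 n) \<noteq> {}})"
      by blast
  qed auto
  also have "\<dots> \<in> sets M"
    using K F unfolding random_compact_set_def
    by (intro sets.countable_UN image_subsetI) (metis closed_Int_compact compact_cball)
  finally show ?thesis .
qed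

lemma supp_fun_measurable:
  assumes X: "fuzzy_random_variable M X" and \<alpha>: "\<alpha> \<in> {0..1}"
  shows "(\<lambda>\<omega>. supp_fun (X \<omega>) u \<alpha>) \<in> borel_measurable M"
  unfolding borel_measurable_iff_ge
proof
  fix a
  have "{\<omega> \<in> space M. a \<le> supp_fun (X \<omega>) u \<alpha>} = {\<omega> \<in> space M. flevel (X \<omega>) \<alpha> \<inter> {v. a \<le> u * v} \<noteq> {}}"
    using X \<alpha> supp_fun_ge_iff by (auto simp: fuzzy_random_variable_def)
  also have "\<dots> \<in> sets M"
    using X \<alpha> unfolding fuzzy_random_variable_def
    by (intro random_compact_set_hits_closed closed_Collect_le continuous_intros) auto
  finally show "{\<omega> \<in> space M. a \<le> supp_fun (X \<omega>) u \<alpha>} \<in> sets M" .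
qed

lemma supp_fun_integrable:
  assumes X: "fuzzy_random_variable M X" and fin: "(\<integral>\<^sup>+\<omega>. ennreal (norm0 (X \<omega>)) \<partial>M) < \<infinity>"
    and u: "u \<in> {-1, 1}" and \<alpha>: "\<alpha> \<in> {0..1}"
  shows "integrable M (\<lambda>\<omega>. supp_fun (X \<omega>) u \<alpha>)"
proof (rule integrableI_bounded)
  show "(\<lambda>\<omega>. supp_fun (X \<omega>) u \<alpha>) \<in> borel_measurable M"
    using supp_fun_measurable[OF X \<alpha>] .
  have "(\<integral>\<^sup>+\<omega>. ennreal (norm (supp_fun (X \<omega>) u \<alpha>)) \<partial>M) \<le> (\<integral>\<^sup>+\<omega>. ennreal (norm0 (X \<omega>)) \<partial>M)"
    using X abs_supp_fun_le_norm0 u \<alpha>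
    by (intro nn_integral_mono ennreal_leI) (auto simp: fuzzy_random_variable_def)
  then show "(\<integral>\<^sup>+\<omega>. ennreal (norm (supp_fun (X \<omega>) u \<alpha>)) \<partial>M) < \<infinity>"
    using fin by order
qed

section \<open>Medians\<close>

definition largest_median :: "'a measure \<Rightarrow> ('a \<Rightarrow> real) \<Rightarrow> real" where
  "largest_median M Y = Sup {c. 1/2 \<le> measure M {\<omega> \<in> space M. c \<le> Y \<omega>}}"

context prob_space
begin

lemma Med_uminus_iff: "- m \<in> Med M (\<lambda>\<omega>. - Y \<omega>) \<longleftrightarrow> m \<in> Med M Y"
  by (simp add: Med_def conj_commute)

lemma prob_le_of_tendsto:
  fixes Y :: "nat \<Rightarrow> 'a \<Rightarrow> real"
  assumes [measurable]: "\<And>n. Y n \<in> borel_measurable M" "Z \<in> borel_measurable M"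
    and lim: "\<And>\<omega>. \<omega> \<in> space M \<Longrightarrow> (\<lambda>n. Y n \<omega>) \<longlonglongrightarrow> Z \<omega>" and m: "m \<longlonglongrightarrow> c"
    and t: "\<And>n. t \<le> prob {\<omega> \<in> space M. Y n \<omega> \<le> m n}"
  shows "t \<le> prob {\<omega> \<in> space M. Z \<omega> \<le> c}"
proof -
  define B where "B k = {\<omega> \<in> space M. \<exists>n\<ge>k. Y n \<omega> \<le> m n}" for k
  have B [measurable]: "B k \<in> events" for k
    unfolding B_def by measurable
  have "decseq B"
    unfolding B_def decseq_def by (auto intro: order_trans)
  have "t \<le> prob (B k)" for k
    using t[of k] by (rule order_trans) (auto simp: B_def intro!: finite_measure_mono)
  moreover have "(\<lambda>k. prob (B k)) \<longlonglongrightarrow> prob (\<Inter>k. B k)"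
    using \<open>decseq B\<close> by (intro finite_Lim_measure_decseq) auto
  ultimately have "t \<le> prob (\<Inter>k. B k)"
    by (intro LIMSEQ_le_const) auto
  also have "\<dots> \<le> prob {\<omega> \<in> space M. Z \<omega> \<le> c}"
  proof (intro finite_measure_mono subsetI)
    fix \<omega> assume \<omega>: "\<omega> \<in> (\<Inter>k. B k)"
    then have "\<omega> \<in> space M"
      by (auto simp: B_def)
    show "\<omega> \<in> {\<omega> \<in> space M. Z \<omega> \<le> c}"
    proof (rule ccontr)
      assume "\<omega> \<notin> {\<omega> \<in> space M. Z \<omega> \<le> c}"
      then have "0 < Z \<omega> - c"
        using \<open>\<omega> \<in> space M\<close> by simp
      moreover have "(\<lambda>n. Y n \<omega> - m n) \<longlonglongrightarrow> Z \<omega> - c"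
        using lim[OF \<open>\<omega> \<in> space M\<close>] m by (rule tendsto_diff)
      ultimately have "eventually (\<lambda>n. 0 < Y n \<omega> - m n) sequentially"
        by (rule order_tendstoD(1)[rotated])
      then obtain k where "\<And>n. n \<ge> k \<Longrightarrow> m n < Y n \<omega>"
        by (auto simp: eventually_sequentially)
      with \<omega> show False
        by (force simp: B_def)
    qed
  qed measurable
  finally show ?thesis .
qed

lemma Med_tendsto:
  fixes Y :: "nat \<Rightarrow> 'a \<Rightarrow> real"
  assumes [measurable]: "\<And>n. Y n \<in> borel_measurable M" "Z \<in> borel_measurable M"
    and lim: "\<And>\<omega>. \<omega> \<in> space M \<Longrightarrow> (\<lambda>n. Y n \<omega>) \<longlonglongrightarrow> Z \<omega>" and m: "m \<longlonglongrightarrow> c"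
    and med: "\<And>n. m n \<in> Med M (Y n)"
  shows "c \<in> Med M Z"
proof -
  have "1/2 \<le> prob {\<omega> \<in> space M. Z \<omega> \<le> c}"
    using med unfolding Med_def by (intro prob_le_of_tendsto[OF _ _ lim m]) auto
  moreover have "1/2 \<le> prob {\<omega> \<in> space M. - Z \<omega> \<le> - c}"
  proof (rule prob_le_of_tendsto)
    show "(\<lambda>n. - Y n \<omega>) \<longlonglongrightarrow> - Z \<omega>" if "\<omega> \<in> space M" for \<omega>
      using lim[OF that] by (rule tendsto_minus)
    show "(\<lambda>n. - m n) \<longlonglongrightarrow> - c"
      using m by (rule tendsto_minus)
    show "1/2 \<le> prob {\<omega> \<in> space M. - Y n \<omega> \<le> - m n}" for n
      using med[of n] by (simp add: Med_def)
  qed measurable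
  ultimately show ?thesis
    by (simp add: Med_def)
qed

lemma integral_abs_dev_diff_ge:
  fixes Y :: "'a \<Rightarrow> real"
  assumes Y: "integrable M Y" and dc: "d \<le> c"
  shows "(c - d) * (2 * prob {\<omega> \<in> space M. Y \<omega> \<le> d} - 1)
    \<le> (\<integral>\<omega>. \<bar>c - Y \<omega>\<bar> \<partial>M) - (\<integral>\<omega>. \<bar>d - Y \<omega>\<bar> \<partial>M)"
proof -
  have [measurable]: "Y \<in> borel_measurable M"
    using Y by auto
  define S where "S = {\<omega> \<in> space M. Y \<omega> \<le> d}"
  have S [measurable]: "S \<in> events"
    unfolding S_def by measurable
  have ind: "integrable M (indicator S :: 'a \<Rightarrow> real)"
    using S by (intro integrable_real_indicator) (auto simp: less_top[symmetric])
  then have int: "integrable M (\<lambda>\<omega>. (c - d) * (2 * indicator S \<omega> - 1 :: real))"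
    by (intro integrable_mult_right Bochner_Integration.integrable_diff) auto
  have "(c - d) * (2 * prob S - 1) = (\<integral>\<omega>. (c - d) * (2 * indicator S \<omega> - 1 :: real) \<partial>M)"
    using S ind by (simp add: Bochner_Integration.integral_diff prob_space)
  also have "\<dots> \<le> (\<integral>\<omega>. \<bar>c - Y \<omega>\<bar> - \<bar>d - Y \<omega>\<bar> \<partial>M)"
    using Y int dc by (intro integral_mono) (auto simp: S_def indicator_def)
  also have "\<dots> = (\<integral>\<omega>. \<bar>c - Y \<omega>\<bar> \<partial>M) - (\<integral>\<omega>. \<bar>d - Y \<omega>\<bar> \<partial>M)"
    using Y by (intro Bochner_Integration.integral_diff) auto
  finally show ?thesis
    by (simp add: S_def)
qed

lemma integral_abs_dev_le_of_half_le:
  fixes Y :: "'a \<Rightarrow> real"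
  assumes Y: "integrable M Y" and m: "1/2 \<le> prob {\<omega> \<in> space M. Y \<omega> \<le> m}" and "m \<le> c"
  shows "(\<integral>\<omega>. \<bar>m - Y \<omega>\<bar> \<partial>M) \<le> (\<integral>\<omega>. \<bar>c - Y \<omega>\<bar> \<partial>M)"
proof -
  have "0 \<le> (c - m) * (2 * prob {\<omega> \<in> space M. Y \<omega> \<le> m} - 1)"
    using m \<open>m \<le> c\<close> by simp
  then show ?thesis
    using integral_abs_dev_diff_ge[OF Y \<open>m \<le> c\<close>] by linarith
qed

lemma half_le_prob_ge_of_abs_dev_minimal:
  fixes Y :: "'a \<Rightarrow> real"
  assumes Y: "integrable M Y" and opt: "\<And>d. (\<integral>\<omega>. \<bar>m - Y \<omega>\<bar> \<partial>M) \<le> (\<integral>\<omega>. \<bar>d - Y \<omega>\<bar> \<partial>M)"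
  shows "1/2 \<le> prob {\<omega> \<in> space M. m \<le> Y \<omega>}"
proof -
  have Y_meas [measurable]: "Y \<in> borel_measurable M"
    using Y by auto
  define d where "d n = m - inverse (real (Suc n))" for n
  have "1/2 \<le> prob {\<omega> \<in> space M. - Y \<omega> \<le> - m}"
  proof (rule prob_le_of_tendsto[where Y="\<lambda>_ \<omega>. - Y \<omega>" and m="\<lambda>n. - d n"])
    have "d \<longlonglongrightarrow> m - 0"
      unfolding d_def by (intro tendsto_diff tendsto_const LIMSEQ_inverse_real_of_nat)
    then show "(\<lambda>n. - d n) \<longlonglongrightarrow> - m"
      by (simp add: tendsto_minus)
    fix n
    have "d n < m"
      by (simp add: d_def)
    then have "(m - d n) * (2 * prob {\<omega> \<in> space M. Y \<omega> \<le> d n} - 1) \<le> 0"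
      using integral_abs_dev_diff_ge[OF Y less_imp_le[OF \<open>d n < m\<close>]] opt[of "d n"] by linarith
    then have "prob {\<omega> \<in> space M. Y \<omega> \<le> d n} \<le> 1/2"
      using \<open>d n < m\<close> by (simp add: mult_le_0_iff)
    moreover have "prob (space M - {\<omega> \<in> space M. Y \<omega> \<le> d n}) = 1 - prob {\<omega> \<in> space M. Y \<omega> \<le> d n}"
      by (rule prob_compl) measurable
    moreover have "prob (space M - {\<omega> \<in> space M. Y \<omega> \<le> d n}) \<le> prob {\<omega> \<in> space M. - Y \<omega> \<le> - d n}"
      by (rule finite_measure_mono) (force, measurable)
    ultimately show "1/2 \<le> prob {\<omega> \<in> space M. - Y \<omega> \<le> - d n}"
      by linarith
  qed (use borel_measurable_uminus[OF Y_meas] in auto)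
  then show ?thesis
    by simp
qed

lemma Med_iff_abs_dev_minimal:
  fixes Y :: "'a \<Rightarrow> real"
  assumes Y: "integrable M Y"
  shows "m \<in> Med M Y \<longleftrightarrow> (\<forall>c. (\<integral>\<omega>. \<bar>m - Y \<omega>\<bar> \<partial>M) \<le> (\<integral>\<omega>. \<bar>c - Y \<omega>\<bar> \<partial>M))"
proof
  assume m: "m \<in> Med M Y"
  show "\<forall>c. (\<integral>\<omega>. \<bar>m - Y \<omega>\<bar> \<partial>M) \<le> (\<integral>\<omega>. \<bar>c - Y \<omega>\<bar> \<partial>M)"
  proof
    fix c
    show "(\<integral>\<omega>. \<bar>m - Y \<omega>\<bar> \<partial>M) \<le> (\<integral>\<omega>. \<bar>c - Y \<omega>\<bar> \<partial>M)"
    proof (cases "m \<le> c")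
      case True
      then show ?thesis
        using integral_abs_dev_le_of_half_le[OF Y _ True] m by (simp add: Med_def)
    next
      case False
      have "1/2 \<le> prob {\<omega> \<in> space M. - Y \<omega> \<le> - m}"
        using m by (simp add: Med_def)
      from integral_abs_dev_le_of_half_le[OF integrable_minus[OF Y] this, of "- c"] False
      show ?thesis
        by (simp add: abs_minus_commute)
    qed
  qed
next
  assume opt: "\<forall>c. (\<integral>\<omega>. \<bar>m - Y \<omega>\<bar> \<partial>M) \<le> (\<integral>\<omega>. \<bar>c - Y \<omega>\<bar> \<partial>M)"
  have "1/2 \<le> prob {\<omega> \<in> space M. m \<le> Y \<omega>}"
    using opt by (intro half_le_prob_ge_of_abs_dev_minimal[OF Y]) blast
  moreover have "1/2 \<le> prob {\<omega> \<in> space M. - m \<le> - Y \<omega>}"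
  proof (rule half_le_prob_ge_of_abs_dev_minimal[OF integrable_minus[OF Y]])
    show "(\<integral>\<omega>. \<bar>- m - - Y \<omega>\<bar> \<partial>M) \<le> (\<integral>\<omega>. \<bar>d - - Y \<omega>\<bar> \<partial>M)" for d
    proof -
      have "\<bar>- m - - Y \<omega>\<bar> = \<bar>m - Y \<omega>\<bar>" "\<bar>d - - Y \<omega>\<bar> = \<bar>- d - Y \<omega>\<bar>" for \<omega>
        by arith+
      then show ?thesis
        using opt by simp
    qed
  qed
  ultimately show "m \<in> Med M Y"
    by (simp add: Med_def)
qed

lemma Med_iff_nn_abs_dev_minimal:
  fixes Y :: "'a \<Rightarrow> real"
  assumes Y: "integrable M Y"
  shows "m \<in> Med M Y \<longleftrightarrow> (\<forall>c. (\<integral>\<^sup>+\<omega>. \<bar>m - Y \<omega>\<bar> \<partial>M) \<le> (\<integral>\<^sup>+\<omega>. \<bar>c - Y \<omega>\<bar> \<partial>M))"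
proof -
  have "(\<integral>\<^sup>+\<omega>. \<bar>c - Y \<omega>\<bar> \<partial>M) = ennreal (\<integral>\<omega>. \<bar>c - Y \<omega>\<bar> \<partial>M)" for c
    using Y by (intro nn_integral_eq_integral) auto
  then show ?thesis
    unfolding Med_iff_abs_dev_minimal[OF Y] by (simp add: ennreal_le_iff)
qed

lemma nn_integral_abs_diff_le:
  fixes Y :: "'a \<Rightarrow> real"
  assumes [measurable]: "Y \<in> borel_measurable M"
  shows "(\<integral>\<^sup>+\<omega>. \<bar>c - Y \<omega>\<bar> \<partial>M) \<le> ennreal \<bar>c\<bar> + (\<integral>\<^sup>+\<omega>. \<bar>Y \<omega>\<bar> \<partial>M)"
proof -
  have "(\<integral>\<^sup>+\<omega>. \<bar>c - Y \<omega>\<bar> \<partial>M) \<le> (\<integral>\<^sup>+\<omega>. ennreal \<bar>c\<bar> + ennreal \<bar>Y \<omega>\<bar> \<partial>M)"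
  proof (intro nn_integral_mono)
    fix \<omega>
    have "ennreal \<bar>c - Y \<omega>\<bar> \<le> ennreal (\<bar>c\<bar> + \<bar>Y \<omega>\<bar>)"
      by (intro ennreal_leI abs_triangle_ineq4)
    then show "ennreal \<bar>c - Y \<omega>\<bar> \<le> ennreal \<bar>c\<bar> + ennreal \<bar>Y \<omega>\<bar>"
      by (simp add: ennreal_plus)
  qed
  also have "\<dots> = (\<integral>\<^sup>+\<omega>. ennreal \<bar>c\<bar> \<partial>M) + (\<integral>\<^sup>+\<omega>. \<bar>Y \<omega>\<bar> \<partial>M)"
    by (rule nn_integral_add; measurable)
  finally show ?thesis
    by (simp add: emeasure_space_1)
qed

lemma closed_upper_tail_set:
  fixes Y :: "'a \<Rightarrow> real"
  assumes [measurable]: "Y \<in> borel_measurable M"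
  shows "closed {c. t \<le> prob {\<omega> \<in> space M. c \<le> Y \<omega>}}"
  unfolding closed_sequential_limits
proof (intro allI impI, elim conjE)
  fix c :: "nat \<Rightarrow> real" and l
  assume c: "\<forall>n. c n \<in> {c. t \<le> prob {\<omega> \<in> space M. c \<le> Y \<omega>}}" and "c \<longlonglongrightarrow> l"
  have "t \<le> prob {\<omega> \<in> space M. - Y \<omega> \<le> - l}"
  proof (rule prob_le_of_tendsto[where Y="\<lambda>_ \<omega>. - Y \<omega>" and m="\<lambda>n. - c n"])
    show "(\<lambda>n. - c n) \<longlonglongrightarrow> - l"
      using \<open>c \<longlonglongrightarrow> l\<close> by (rule tendsto_minus)
    show "t \<le> prob {\<omega> \<in> space M. - Y \<omega> \<le> - c n}" for n
      using c by simp
  qed (use borel_measurable_uminus[OF \<open>Y \<in> borel_measurable M\<close>] in auto)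
  then show "l \<in> {c. t \<le> prob {\<omega> \<in> space M. c \<le> Y \<omega>}}"
    by simp
qed

lemma
  fixes Y :: "'a \<Rightarrow> real"
  assumes [measurable]: "Y \<in> borel_measurable M"
  shows upper_tail_half_set_nonempty: "{c. 1/2 \<le> prob {\<omega> \<in> space M. c \<le> Y \<omega>}} \<noteq> {}"
    and upper_tail_half_set_bdd_above: "bdd_above {c. 1/2 \<le> prob {\<omega> \<in> space M. c \<le> Y \<omega>}}"
proof -
  interpret D: real_distribution "distr M borel Y"
    by simp
  have cdf: "cdf (distr M borel Y) c = prob {\<omega> \<in> space M. Y \<omega> \<le> c}" for c
    by (simp add: cdf_def measure_distr vimage_def Int_def conj_commute)
  have compl: "prob (space M - {\<omega> \<in> space M. Y \<omega> \<le> c}) = 1 - prob {\<omega> \<in> space M. Y \<omega> \<le> c}" for c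
    by (intro prob_compl) measurable
  have "eventually (\<lambda>c. cdf (distr M borel Y) c < 1/2) at_bot"
    by (intro order_tendstoD(2)[OF D.cdf_lim_at_bot]) simp
  then obtain a where a: "prob {\<omega> \<in> space M. Y \<omega> \<le> a} < 1/2"
    unfolding eventually_at_bot_linorder cdf by blast
  have "prob (space M - {\<omega> \<in> space M. Y \<omega> \<le> a}) \<le> prob {\<omega> \<in> space M. a \<le> Y \<omega>}"
    by (intro finite_measure_mono) auto
  then have "a \<in> {c. 1/2 \<le> prob {\<omega> \<in> space M. c \<le> Y \<omega>}}"
    using a compl[of a] by simp
  then show "{c. 1/2 \<le> prob {\<omega> \<in> space M. c \<le> Y \<omega>}} \<noteq> {}"
    by blast
  have "eventually (\<lambda>c. 1/2 < cdf (distr M borel Y) c) at_top"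
    by (intro order_tendstoD(1)[OF D.cdf_lim_at_top_prob]) simp
  then obtain b where b: "1/2 < prob {\<omega> \<in> space M. Y \<omega> \<le> b}"
    unfolding eventually_at_top_linorder cdf by blast
  show "bdd_above {c. 1/2 \<le> prob {\<omega> \<in> space M. c \<le> Y \<omega>}}"
  proof (rule bdd_aboveI)
    fix c assume c: "c \<in> {c. 1/2 \<le> prob {\<omega> \<in> space M. c \<le> Y \<omega>}}"
    show "c \<le> b"
    proof (rule ccontr)
      assume "\<not> c \<le> b"
      then have "prob {\<omega> \<in> space M. c \<le> Y \<omega>} \<le> prob (space M - {\<omega> \<in> space M. Y \<omega> \<le> b})"
        by (intro finite_measure_mono) auto
      then show False
        using b c compl[of b] by simp
    qed
  qed
qed

lemma largest_median_in_Med: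
  fixes Y :: "'a \<Rightarrow> real"
  assumes [measurable]: "Y \<in> borel_measurable M"
  shows "largest_median M Y \<in> Med M Y"
proof -
  let ?S = "{c. 1/2 \<le> prob {\<omega> \<in> space M. c \<le> Y \<omega>}}"
  define h where "h = largest_median M Y"
  have "h \<in> ?S"
    unfolding h_def largest_median_def
    by (intro closed_contains_Sup upper_tail_half_set_nonempty upper_tail_half_set_bdd_above closed_upper_tail_set) simp_all
  moreover have "1/2 \<le> prob {\<omega> \<in> space M. Y \<omega> \<le> h}"
  proof (rule prob_le_of_tendsto[where Y="\<lambda>_. Y" and m="\<lambda>n. h + inverse (real (Suc n))"])
    show "(\<lambda>n. h + inverse (real (Suc n))) \<longlonglongrightarrow> h"
      using tendsto_add[OF tendsto_const LIMSEQ_inverse_real_of_nat, of h] by simp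
    fix n
    define c where "c = h + inverse (real (Suc n))"
    have "c \<notin> ?S"
    proof
      assume "c \<in> ?S"
      then have "c \<le> h"
        unfolding h_def largest_median_def by (intro cSup_upper upper_tail_half_set_bdd_above) simp_all
      then show False
        by (simp add: c_def)
    qed
    moreover have "prob (space M - {\<omega> \<in> space M. c \<le> Y \<omega>}) = 1 - prob {\<omega> \<in> space M. c \<le> Y \<omega>}"
      by (intro prob_compl) measurable
    moreover have "prob (space M - {\<omega> \<in> space M. c \<le> Y \<omega>}) \<le> prob {\<omega> \<in> space M. Y \<omega> \<le> c}"
      by (intro finite_measure_mono) auto
    ultimately show "1/2 \<le> prob {\<omega> \<in> space M. Y \<omega> \<le> h + inverse (real (Suc n))}"
      by (simp add: c_def)
  qed auto
  ultimately show ?thesis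
    by (simp add: Med_def h_def)
qed

lemma Med_le_largest_median:
  fixes Y :: "'a \<Rightarrow> real"
  assumes [measurable]: "Y \<in> borel_measurable M" and "m \<in> Med M Y"
  shows "m \<le> largest_median M Y"
  using assms(2) unfolding largest_median_def Med_def
  by (intro cSup_upper upper_tail_half_set_bdd_above) simp_all

lemma largest_median_mono:
  fixes Y Z :: "'a \<Rightarrow> real"
  assumes [measurable]: "Y \<in> borel_measurable M" "Z \<in> borel_measurable M"
    and le: "\<And>\<omega>. \<omega> \<in> space M \<Longrightarrow> Y \<omega> \<le> Z \<omega>"
  shows "largest_median M Y \<le> largest_median M Z"
  unfolding largest_median_def
proof (intro cSup_subset_mono upper_tail_half_set_nonempty upper_tail_half_set_bdd_above subsetI)
  fix c assume "c \<in> {c. 1/2 \<le> prob {\<omega> \<in> space M. c \<le> Y \<omega>}}"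
  moreover have "prob {\<omega> \<in> space M. c \<le> Y \<omega>} \<le> prob {\<omega> \<in> space M. c \<le> Z \<omega>}"
    using le by (intro finite_measure_mono) (auto intro: order_trans)
  ultimately show "c \<in> {c. 1/2 \<le> prob {\<omega> \<in> space M. c \<le> Z \<omega>}}"
    by simp
qed simp_all

end

section \<open>Integrals over the levels\<close>

text \<open>Lebesgue measure on the levels \<open>(0,1]\<close>: level \<open>0\<close> is a null set, and on \<open>(0,1]\<close> support
  functions are left-continuous.\<close>

abbreviation lborel_0_1 :: "real measure" where
  "lborel_0_1 \<equiv> restrict_space lborel {0<..1}"

lemma prob_space_lborel_0_1: "prob_space lborel_0_1"
  by (intro prob_spaceI) (simp add: emeasure_restrict_space)

lemma supp_fun_measurable_0_1:
  assumes "A \<in> Fc"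
  shows "supp_fun A u \<in> borel_measurable lborel_0_1"
proof -
  have "mono_on {0<..1} (\<lambda>\<alpha>. - supp_fun A u \<alpha>)"
    using assms by (intro mono_onI) (simp add: supp_fun_antimono)
  then have "(\<lambda>\<alpha>. - supp_fun A u \<alpha>) \<in> borel_measurable (restrict_space borel {0<..1})"
    by (rule borel_measurable_mono_on_fnc)
  then have "(\<lambda>\<alpha>. - (- supp_fun A u \<alpha>)) \<in> borel_measurable (restrict_space borel {0<..1})"
    by (rule borel_measurable_uminus)
  then show ?thesis
    by (simp add: measurable_cong_sets[OF sets_restrict_space_cong[OF sets_lborel] refl])
qed

lemma antimono_left_continuous_ge_iff:
  fixes f :: "real \<Rightarrow> real"
  assumes anti: "\<And>\<beta> \<gamma>. 0 < \<beta> \<Longrightarrow> \<beta> \<le> \<gamma> \<Longrightarrow> \<gamma> \<le> \<alpha> \<Longrightarrow> f \<gamma> \<le> f \<beta>"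
    and "0 < \<alpha>" and cont: "continuous (at_left \<alpha>) f"
  shows "a \<le> f \<alpha> \<longleftrightarrow> (\<forall>q \<in> \<rat> \<inter> {0<..<\<alpha>}. a \<le> f q)"
proof
  assume "a \<le> f \<alpha>"
  then show "\<forall>q \<in> \<rat> \<inter> {0<..<\<alpha>}. a \<le> f q"
    using anti by (force intro: order_trans)
next
  assume rat: "\<forall>q \<in> \<rat> \<inter> {0<..<\<alpha>}. a \<le> f q"
  show "a \<le> f \<alpha>"
  proof (rule ccontr)
    assume "\<not> a \<le> f \<alpha>"
    then have "eventually (\<lambda>\<beta>. f \<beta> < a) (at_left \<alpha>)"
      using cont by (intro order_tendstoD(2)) (auto simp: continuous_within)
    then obtain b where "b < \<alpha>" and b: "\<And>\<beta>. b < \<beta> \<Longrightarrow> \<beta> < \<alpha> \<Longrightarrow> f \<beta> < a"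
      unfolding eventually_at_left_field by blast
    obtain q where "q \<in> \<rat>" "max b 0 < q" "q < \<alpha>"
      using Rats_dense_in_real[of "max b 0" \<alpha>] \<open>b < \<alpha>\<close> \<open>0 < \<alpha>\<close> by auto
    then show False
      using rat b[of q] by force
  qed
qed

lemma measurable_antimono_left_continuous:
  fixes f :: "'a \<Rightarrow> real \<Rightarrow> real"
  assumes meas: "\<And>\<alpha>. \<alpha> \<in> {0<..1} \<Longrightarrow> (\<lambda>\<omega>. f \<omega> \<alpha>) \<in> borel_measurable M"
    and anti: "\<And>\<omega> \<beta> \<gamma>. \<omega> \<in> space M \<Longrightarrow> 0 < \<beta> \<Longrightarrow> \<beta> \<le> \<gamma> \<Longrightarrow> \<gamma> \<le> 1 \<Longrightarrow> f \<omega> \<gamma> \<le> f \<omega> \<beta>"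
    and cont: "\<And>\<omega> \<alpha>. \<omega> \<in> space M \<Longrightarrow> \<alpha> \<in> {0<..1} \<Longrightarrow> continuous (at_left \<alpha>) (f \<omega>)"
  shows "(\<lambda>(\<omega>, \<alpha>). f \<omega> \<alpha>) \<in> borel_measurable (M \<Otimes>\<^sub>M lborel_0_1)"
  unfolding borel_measurable_iff_ge
proof
  fix a
  define Q where "Q = \<rat> \<inter> {0<..<1::real}"
  define R where "R q = (space M \<times> {0<..q}) \<union> ({\<omega> \<in> space M. a \<le> f \<omega> q} \<times> {0<..1})" for q
  have "{x \<in> space (M \<Otimes>\<^sub>M lborel_0_1). a \<le> (case x of (\<omega>, \<alpha>) \<Rightarrow> f \<omega> \<alpha>)}
      = (space M \<times> {0<..1}) \<inter> (\<Inter>q\<in>Q. R q)"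
  proof (intro set_eqI)
    fix x :: "'a \<times> real"
    obtain \<omega> \<alpha> where x: "x = (\<omega>, \<alpha>)"
      by fastforce
    have "a \<le> f \<omega> \<alpha> \<longleftrightarrow> (\<forall>q \<in> \<rat> \<inter> {0<..<\<alpha>}. a \<le> f \<omega> q)" if "\<omega> \<in> space M" "\<alpha> \<in> {0<..1}"
      by (rule antimono_left_continuous_ge_iff) (use that anti cont in auto)
    then show "x \<in> {x \<in> space (M \<Otimes>\<^sub>M lborel_0_1). a \<le> (case x of (\<omega>, \<alpha>) \<Rightarrow> f \<omega> \<alpha>)}
        \<longleftrightarrow> x \<in> (space M \<times> {0<..1}) \<inter> (\<Inter>q\<in>Q. R q)"
      by (auto simp: x space_pair_measure Q_def R_def;
          meson IntI greaterThanLessThan_iff not_le order_less_le_trans)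
  qed
  also have "\<dots> \<in> sets (M \<Otimes>\<^sub>M lborel_0_1)"
  proof (intro sets.Int sets.countable_INT' pair_measureI)
    show "countable Q"
      unfolding Q_def by (intro countable_Int1 countable_rat)
    have "1/2 \<in> Q"
      unfolding Q_def by simp
    then show "Q \<noteq> {}"
      by blast
    show "R ` Q \<subseteq> sets (M \<Otimes>\<^sub>M lborel_0_1)"
      using meas unfolding R_def Q_def
      by (auto intro!: sets.Un pair_measureI simp: sets_restrict_space_iff borel_measurable_iff_ge)
  qed (auto simp: sets_restrict_space_iff)
  finally show "{x \<in> space (M \<Otimes>\<^sub>M lborel_0_1). a \<le> (case x of (\<omega>, \<alpha>) \<Rightarrow> f \<omega> \<alpha>)} \<in> sets (M \<Otimes>\<^sub>M lborel_0_1)" .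
qed


lemma ennreal_interval_integral_0_1:
  fixes f :: "real \<Rightarrow> real"
  assumes f: "f \<in> borel_measurable lborel_0_1"
    and bnd: "\<And>\<alpha>. \<alpha> \<in> {0<..1} \<Longrightarrow> 0 \<le> f \<alpha> \<and> f \<alpha> \<le> B"
  shows "ennreal (LBINT \<alpha>=0..1. f \<alpha>) = (\<integral>\<^sup>+\<alpha>. f \<alpha> \<partial>lborel_0_1)"
proof -
  interpret prob_space lborel_0_1
    by (rule prob_space_lborel_0_1)
  have "AE \<alpha> in lborel_0_1. 0 \<le> f \<alpha>"
    using bnd by (intro AE_I2) simp
  moreover have "integrable lborel_0_1 f"
    using bnd by (intro integrable_const_bound[where B=B] AE_I2 f) auto
  moreover have "(LBINT \<alpha>=0..1. f \<alpha>) = integral\<^sup>L lborel_0_1 f"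
    using interval_integral_Ioc[of 0 1 f]
    by (simp add: integral_restrict_space set_lebesgue_integral_def zero_ereal_def one_ereal_def)
  ultimately show ?thesis
    by (simp add: nn_integral_eq_integral)
qed

lemma ennreal_rho1:
  assumes A: "A \<in> Fc" and B: "B \<in> Fc"
  shows "ennreal (rho1 A B)
    = (\<Sum>u\<in>{-1, 1}. ennreal (1/2) * (\<integral>\<^sup>+\<alpha>. \<bar>supp_fun A u \<alpha> - supp_fun B u \<alpha>\<bar> \<partial>lborel_0_1))"
proof -
  have "ennreal (LBINT \<alpha>=0..1. \<bar>supp_fun A u \<alpha> - supp_fun B u \<alpha>\<bar>)
      = (\<integral>\<^sup>+\<alpha>. \<bar>supp_fun A u \<alpha> - supp_fun B u \<alpha>\<bar> \<partial>lborel_0_1)" if u: "u \<in> {-1, 1}" for u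
  proof (rule ennreal_interval_integral_0_1)
    show "(\<lambda>\<alpha>. \<bar>supp_fun A u \<alpha> - supp_fun B u \<alpha>\<bar>) \<in> borel_measurable lborel_0_1"
      using supp_fun_measurable_0_1[OF A] supp_fun_measurable_0_1[OF B] by measurable
    show "0 \<le> \<bar>supp_fun A u \<alpha> - supp_fun B u \<alpha>\<bar> \<and> \<bar>supp_fun A u \<alpha> - supp_fun B u \<alpha>\<bar> \<le> norm0 A + norm0 B"
      if "\<alpha> \<in> {0<..1}" for \<alpha>
      using abs_supp_fun_le_norm0[OF A u, of \<alpha>] abs_supp_fun_le_norm0[OF B u, of \<alpha>] that by auto
  qed
  moreover have LBINT_nonneg: "0 \<le> (LBINT \<alpha>=0..1. \<bar>supp_fun A u \<alpha> - supp_fun B u \<alpha>\<bar>)" for u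
    by (simp add: interval_lebesgue_integral_def set_lebesgue_integral_def)
  ultimately have "ennreal (1/2 * (LBINT \<alpha>=0..1. \<bar>supp_fun A u \<alpha> - supp_fun B u \<alpha>\<bar>))
      = ennreal (1/2) * (\<integral>\<^sup>+\<alpha>. \<bar>supp_fun A u \<alpha> - supp_fun B u \<alpha>\<bar> \<partial>lborel_0_1)" if "u \<in> {-1, 1}" for u
    by (subst ennreal_mult) (use that in simp_all)
  moreover have "ennreal (rho1 A B)
      = (\<Sum>u\<in>{-1, 1}. ennreal (1/2 * (LBINT \<alpha>=0..1. \<bar>supp_fun A u \<alpha> - supp_fun B u \<alpha>\<bar>)))"
    unfolding rho1_def by (rule sum_ennreal[symmetric]) (simp add: LBINT_nonneg)
  ultimately show ?thesis
    by (simp only: cong: sum.cong)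
qed

lemma AE_lborel_0_1_dense:
  assumes ae: "AE \<alpha> in lborel_0_1. P \<alpha>" and "0 \<le> a" "a < b" "b \<le> 1"
  shows "\<exists>\<gamma>\<in>{a<..<b}. P \<gamma>"
proof (rule ccontr)
  assume none: "\<not> (\<exists>\<gamma>\<in>{a<..<b}. P \<gamma>)"
  have "AE \<alpha> in lborel. \<alpha> \<in> {0<..1} \<longrightarrow> P \<alpha>"
    using ae by (subst (asm) AE_restrict_space_iff) auto
  then obtain N where N: "{\<alpha> \<in> space lborel. \<not> (\<alpha> \<in> {0<..1} \<longrightarrow> P \<alpha>)} \<subseteq> N" "emeasure lborel N = 0" "N \<in> sets lborel"
    by (rule AE_E)
  have "{a<..<b} \<subseteq> N"
    using none N(1) \<open>0 \<le> a\<close> \<open>b \<le> 1\<close> by fastforce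
  then have "emeasure lborel {a<..<b} \<le> emeasure lborel N"
    by (rule emeasure_mono) (rule N(3))
  then show False
    using N(2) \<open>a < b\<close> by simp
qed

lemma AE_lborel_0_1_seq_between:
  assumes ae: "AE \<alpha> in lborel_0_1. P \<alpha>"
    and lr: "\<And>n. 0 \<le> l n \<and> l n < r n \<and> r n \<le> 1" and "l \<longlonglongrightarrow> c" "r \<longlonglongrightarrow> c"
  shows "\<exists>\<beta>. (\<forall>n. \<beta> n \<in> {l n<..<r n} \<and> P (\<beta> n)) \<and> \<beta> \<longlonglongrightarrow> c"
proof -
  have "\<forall>n. \<exists>b. b \<in> {l n<..<r n} \<and> P b"
    using AE_lborel_0_1_dense[OF ae] lr by blast
  then obtain \<beta> where \<beta>: "\<forall>n. \<beta> n \<in> {l n<..<r n} \<and> P (\<beta> n)"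
    by (rule choice[THEN exE])
  have "\<beta> \<longlonglongrightarrow> c"
    by (rule real_tendsto_sandwich[OF always_eventually always_eventually \<open>l \<longlonglongrightarrow> c\<close> \<open>r \<longlonglongrightarrow> c\<close>])
      (use \<beta> in \<open>auto intro: less_imp_le\<close>)
  with \<beta> show ?thesis
    by blast
qed

lemma AE_lborel_0_1_seq_at_right_0:
  assumes ae: "AE \<alpha> in lborel_0_1. P \<alpha>"
  shows "\<exists>\<beta>. (\<forall>n. \<beta> n \<in> {0<..1} \<and> P (\<beta> n)) \<and> filterlim \<beta> (at_right 0) sequentially"
proof -
  have "\<exists>\<beta>. (\<forall>n. \<beta> n \<in> {0<..<inverse (real (Suc n))} \<and> P (\<beta> n)) \<and> \<beta> \<longlonglongrightarrow> 0"
    by (rule AE_lborel_0_1_seq_between[OF ae _ tendsto_const LIMSEQ_inverse_real_of_nat])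
      (simp add: inverse_le_1_iff)
  then obtain \<beta> where \<beta>: "\<forall>n. \<beta> n \<in> {0<..<inverse (real (Suc n))} \<and> P (\<beta> n)" "\<beta> \<longlonglongrightarrow> 0"
    by blast
  have "\<beta> n \<in> {0<..1}" for n
    using \<beta>(1) inverse_le_1_iff[of "real (Suc n)"] by fastforce
  moreover have "filterlim \<beta> (at_right 0) sequentially"
    using \<beta> by (intro tendsto_imp_filterlim_at_right) auto
  ultimately show ?thesis
    using \<beta> by blast
qed

lemma AE_lborel_0_1_seq_at_left:
  assumes ae: "AE \<alpha> in lborel_0_1. P \<alpha>" and \<alpha>: "\<alpha> \<in> {0<..1}"
  shows "\<exists>\<beta>. (\<forall>n. \<beta> n \<in> {0<..1} \<and> P (\<beta> n)) \<and> filterlim \<beta> (at_left \<alpha>) sequentially"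
proof -
  define l where "l n = \<alpha> - \<alpha> * inverse (real (Suc (Suc n)))" for n
  have l: "0 \<le> l n \<and> l n < \<alpha> \<and> \<alpha> \<le> 1" for n
  proof -
    have "0 < inverse (real (Suc (Suc n)))" "inverse (real (Suc (Suc n))) \<le> 1"
      by (simp_all add: inverse_le_1_iff)
    with \<alpha> show ?thesis
      by (simp add: l_def mult_left_le)
  qed
  have "l \<longlonglongrightarrow> \<alpha> - \<alpha> * 0"
    unfolding l_def
    by (intro tendsto_diff tendsto_const tendsto_mult LIMSEQ_inverse_real_of_nat[THEN LIMSEQ_Suc])
  then have "\<exists>\<beta>. (\<forall>n. \<beta> n \<in> {l n<..<\<alpha>} \<and> P (\<beta> n)) \<and> \<beta> \<longlonglongrightarrow> \<alpha>"
    by (intro AE_lborel_0_1_seq_between[OF ae l _ tendsto_const]) simp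
  then obtain \<beta> where \<beta>: "\<forall>n. \<beta> n \<in> {l n<..<\<alpha>} \<and> P (\<beta> n)" "\<beta> \<longlonglongrightarrow> \<alpha>"
    by blast
  have "\<beta> n \<in> {0<..1}" for n
    using \<beta>(1)[rule_format, of n] l[of n] by auto
  moreover have "filterlim \<beta> (at_left \<alpha>) sequentially"
    using \<beta> by (intro tendsto_imp_filterlim_at_left) auto
  ultimately show ?thesis
    using \<beta> by blast
qed

lemma AE_lborel_0_1_approx:
  assumes ae: "AE \<alpha> in lborel_0_1. P \<alpha>" and \<alpha>: "\<alpha> \<in> {0..1}"
  shows "\<exists>\<beta>. (\<forall>n. \<beta> n \<in> {0<..1} \<and> P (\<beta> n)) \<and>
    (\<forall>A u. A \<in> Fc \<longrightarrow> (\<lambda>n. supp_fun A u (\<beta> n)) \<longlonglongrightarrow> supp_fun A u \<alpha>)"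
proof (cases "\<alpha> = 0")
  case True
  obtain \<beta> where \<beta>: "\<forall>n. \<beta> n \<in> {0<..1} \<and> P (\<beta> n)" "filterlim \<beta> (at_right 0) sequentially"
    using AE_lborel_0_1_seq_at_right_0[OF ae] by blast
  have "(\<lambda>n. supp_fun A u (\<beta> n)) \<longlonglongrightarrow> supp_fun A u \<alpha>" if "A \<in> Fc" for A u
    using filterlim_compose[OF supp_fun_continuous_at_right_0[OF that, unfolded continuous_within] \<beta>(2)] True
    by simp
  with \<beta> show ?thesis
    by blast
next
  case False
  then have \<alpha>': "\<alpha> \<in> {0<..1}"
    using \<alpha> by simp
  obtain \<beta> where \<beta>: "\<forall>n. \<beta> n \<in> {0<..1} \<and> P (\<beta> n)" "filterlim \<beta> (at_left \<alpha>) sequentially"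
    using AE_lborel_0_1_seq_at_left[OF ae \<alpha>'] by blast
  have "(\<lambda>n. supp_fun A u (\<beta> n)) \<longlonglongrightarrow> supp_fun A u \<alpha>" if "A \<in> Fc" for A u
    using filterlim_compose[OF supp_fun_continuous_at_left[OF that \<alpha>', unfolded continuous_within] \<beta>(2)] .
  with \<beta> show ?thesis
    by blast
qed

section \<open>Fuzzy sets with prescribed level sets\<close>

text \<open>The Negoita-Ralescu construction of a fuzzy set from its \<open>\<alpha>\<close>-levels \<open>[a \<alpha>, b \<alpha>]\<close>.\<close>

definition fuzzy_of_levels :: "(real \<Rightarrow> real) \<Rightarrow> (real \<Rightarrow> real) \<Rightarrow> real \<Rightarrow> real" where
  "fuzzy_of_levels a b x = Sup (insert 0 {\<alpha> \<in> {0<..1}. a \<alpha> \<le> x \<and> x \<le> b \<alpha>})"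

lemma bdd_above_fuzzy_of_levels:
  fixes a b :: "real \<Rightarrow> real"
  shows "bdd_above (insert 0 {\<alpha> \<in> {0<..1}. a \<alpha> \<le> x \<and> x \<le> b \<alpha>})"
  by (rule bdd_aboveI[of _ 1]) auto

lemma fuzzy_of_levels_bounds: "0 \<le> fuzzy_of_levels a b x" "fuzzy_of_levels a b x \<le> 1"
  unfolding fuzzy_of_levels_def
  by (intro cSup_upper bdd_above_fuzzy_of_levels insertI1) (intro cSup_least; auto)

lemma fuzzy_of_levels_pos_iff: "0 < fuzzy_of_levels a b x \<longleftrightarrow> (\<exists>\<alpha>\<in>{0<..1}. x \<in> {a \<alpha>..b \<alpha>})"
  unfolding fuzzy_of_levels_def less_cSup_iff[OF insert_not_empty bdd_above_fuzzy_of_levels]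
  by force

lemma flevel_fuzzy_of_levels:
  assumes mono: "\<And>\<beta> \<gamma>. 0 \<le> \<beta> \<Longrightarrow> \<beta> \<le> \<gamma> \<Longrightarrow> \<gamma> \<le> 1 \<Longrightarrow> a \<beta> \<le> a \<gamma> \<and> b \<gamma> \<le> b \<beta>"
    and cont: "continuous (at_left \<alpha>) a" "continuous (at_left \<alpha>) b" and \<alpha>: "\<alpha> \<in> {0<..1}"
  shows "flevel (fuzzy_of_levels a b) \<alpha> = {a \<alpha>..b \<alpha>}"
proof (intro set_eqI iffI)
  fix x assume "x \<in> flevel (fuzzy_of_levels a b) \<alpha>"
  then have "\<alpha> \<le> fuzzy_of_levels a b x"
    using \<alpha> by (simp add: flevel_def)
  have "a \<beta> \<le> x \<and> x \<le> b \<beta>" if \<beta>: "\<beta> \<in> {0<..<\<alpha>}" for \<beta>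
  proof -
    have "\<beta> < fuzzy_of_levels a b x"
      using \<beta> \<open>\<alpha> \<le> fuzzy_of_levels a b x\<close> by simp
    then obtain \<gamma> where "\<gamma> \<in> {0<..1}" "a \<gamma> \<le> x" "x \<le> b \<gamma>" "\<beta> < \<gamma>"
      unfolding fuzzy_of_levels_def less_cSup_iff[OF insert_not_empty bdd_above_fuzzy_of_levels]
      using \<beta> by auto
    then show ?thesis
      using mono[of \<beta> \<gamma>] \<beta> by auto
  qed
  then have "eventually (\<lambda>\<beta>. a \<beta> \<le> x \<and> x \<le> b \<beta>) (at_left \<alpha>)"
    using eventually_at_left_real[of 0 \<alpha>] \<alpha> by (auto elim: eventually_mono)
  then show "x \<in> {a \<alpha>..b \<alpha>}"
    using cont unfolding continuous_within
    by (auto intro: tendsto_upperbound tendsto_lowerbound elim: eventually_mono)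
next
  fix x assume "x \<in> {a \<alpha>..b \<alpha>}"
  then have "\<alpha> \<le> fuzzy_of_levels a b x"
    unfolding fuzzy_of_levels_def using \<alpha> by (intro cSup_upper bdd_above_fuzzy_of_levels) auto
  then show "x \<in> flevel (fuzzy_of_levels a b) \<alpha>"
    using \<alpha> by (simp add: flevel_def)
qed

lemma closure_Union_nested_intervals:
  fixes a b :: "real \<Rightarrow> real"
  assumes le: "\<And>\<alpha>. \<alpha> \<in> {0<..1} \<Longrightarrow> a \<alpha> \<le> b \<alpha>"
    and mono: "\<And>\<beta> \<gamma>. 0 \<le> \<beta> \<Longrightarrow> \<beta> \<le> \<gamma> \<Longrightarrow> \<gamma> \<le> 1 \<Longrightarrow> a \<beta> \<le> a \<gamma> \<and> b \<gamma> \<le> b \<beta>"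
  shows "\<exists>c d. c \<le> d \<and> closure (\<Union>\<alpha>\<in>{0<..1}. {a \<alpha>..b \<alpha>}) = {c..d}"
proof -
  have a1: "a 1 \<in> {a \<alpha>..b \<alpha>}" if "\<alpha> \<in> {0<..1}" for \<alpha>
    using mono[of \<alpha> 1] le[of 1] that by auto
  then have "a 1 \<in> (\<Inter>\<alpha>\<in>{0<..1}. {a \<alpha>..b \<alpha>})"
    by blast
  then have "connected (\<Union>\<alpha>\<in>{0<..1}. {a \<alpha>..b \<alpha>})"
    by (intro connected_Union) (auto simp del: Inter_iff INT_iff)
  moreover have "bounded (\<Union>\<alpha>\<in>{0<..1}. {a \<alpha>..b \<alpha>})"
  proof (rule bounded_subset)
    have "{a \<alpha>..b \<alpha>} \<subseteq> {a 0..b 0}" if "\<alpha> \<in> {0<..1}" for \<alpha>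
      using mono[of 0 \<alpha>] that by auto
    then show "(\<Union>\<alpha>\<in>{0<..1}. {a \<alpha>..b \<alpha>}) \<subseteq> {a 0..b 0}"
      by (rule UN_least)
  qed simp
  ultimately obtain c d where cd: "closure (\<Union>\<alpha>\<in>{0<..1}. {a \<alpha>..b \<alpha>}) = {c..d}"
    by (meson compact_closure connected_compact_interval_1 connected_imp_connected_closure)
  moreover have "a 1 \<in> closure (\<Union>\<alpha>\<in>{0<..1}. {a \<alpha>..b \<alpha>})"
    using a1[of 1] closure_subset by fastforce
  ultimately show ?thesis
    by auto
qed

lemma fuzzy_of_levels_in_Fc:
  assumes le: "\<And>\<alpha>. \<alpha> \<in> {0<..1} \<Longrightarrow> a \<alpha> \<le> b \<alpha>"
    and mono: "\<And>\<beta> \<gamma>. 0 \<le> \<beta> \<Longrightarrow> \<beta> \<le> \<gamma> \<Longrightarrow> \<gamma> \<le> 1 \<Longrightarrow> a \<beta> \<le> a \<gamma> \<and> b \<gamma> \<le> b \<beta>"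
    and cont: "\<And>\<alpha>. \<alpha> \<in> {0<..1} \<Longrightarrow> continuous (at_left \<alpha>) a \<and> continuous (at_left \<alpha>) b"
  shows "fuzzy_of_levels a b \<in> Fc"
  unfolding Fc_def
proof (intro CollectI conjI allI ballI)
  show "0 \<le> fuzzy_of_levels a b x" "fuzzy_of_levels a b x \<le> 1" for x
    by (simp_all add: fuzzy_of_levels_bounds)
  show "is_compact_interval (flevel (fuzzy_of_levels a b) \<alpha>)" if "\<alpha> \<in> {0..1}" for \<alpha>
  proof (cases "\<alpha> = 0")
    case True
    have "\<exists>c d. c \<le> d \<and> closure (\<Union>\<alpha>\<in>{0<..1}. {a \<alpha>..b \<alpha>}) = {c..d}"
      by (rule closure_Union_nested_intervals) (use le mono in auto)
    then obtain c d where "c \<le> d" and cd: "closure (\<Union>\<alpha>\<in>{0<..1}. {a \<alpha>..b \<alpha>}) = {c..d}"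
      by blast
    have "flevel (fuzzy_of_levels a b) \<alpha> = closure {x. 0 < fuzzy_of_levels a b x}"
      using True by (simp add: flevel_def)
    also have "{x. 0 < fuzzy_of_levels a b x} = (\<Union>\<alpha>\<in>{0<..1}. {a \<alpha>..b \<alpha>})"
      unfolding fuzzy_of_levels_pos_iff by blast
    finally have "flevel (fuzzy_of_levels a b) \<alpha> = {c..d}"
      using cd by simp
    with \<open>c \<le> d\<close> show ?thesis
      unfolding is_compact_interval_def by blast
  next
    case False
    then have \<alpha>: "\<alpha> \<in> {0<..1}"
      using that by simp
    then have "flevel (fuzzy_of_levels a b) \<alpha> = {a \<alpha>..b \<alpha>}"
      using cont[OF \<alpha>] by (intro flevel_fuzzy_of_levels[OF mono]) auto
    then show ?thesis
      using le[OF \<alpha>] unfolding is_compact_interval_def by blast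
  qed
qed

section \<open>Integrably bounded fuzzy random variables\<close>

lemma ennreal_sum_le_sum_imp_eq:
  fixes x y :: "'i \<Rightarrow> ennreal"
  assumes "finite I" "(\<Sum>i\<in>I. x i) \<le> (\<Sum>i\<in>I. y i)" "(\<Sum>i\<in>I. y i) < \<infinity>"
    and ge: "\<And>i. i \<in> I \<Longrightarrow> y i \<le> x i" and "j \<in> I"
  shows "x j = y j"
proof -
  have sums: "(\<Sum>i\<in>I. z i) = z j + (\<Sum>i\<in>I - {j}. z i)" for z :: "'i \<Rightarrow> ennreal"
    using assms(1,5) by (simp add: sum.remove)
  have "(\<Sum>i\<in>I - {j}. y i) < \<infinity>"
    using assms(3) sums[of y] by (simp add: top.not_eq_extremum)
  have "x j + (\<Sum>i\<in>I - {j}. y i) \<le> x j + (\<Sum>i\<in>I - {j}. x i)"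
    using ge by (intro add_left_mono sum_mono) auto
  also have "\<dots> \<le> y j + (\<Sum>i\<in>I - {j}. y i)"
    using assms(2) unfolding sums[of x] sums[of y] .
  finally have "x j \<le> y j"
    using \<open>(\<Sum>i\<in>I - {j}. y i) < \<infinity>\<close> by (auto simp: add.commute ennreal_add_left_cancel_le)
  then show ?thesis
    using ge[OF \<open>j \<in> I\<close>] by simp
qed

locale integrably_bounded_frv = prob_space M for M :: "'a measure" +
  fixes X :: "'a \<Rightarrow> real \<Rightarrow> real"
  assumes frv: "fuzzy_random_variable M X"
    and integrably_bounded: "(\<integral>\<^sup>+\<omega>. ennreal (norm0 (X \<omega>)) \<partial>M) < \<infinity>"
begin

lemma X_in_Fc: "\<omega> \<in> space M \<Longrightarrow> X \<omega> \<in> Fc"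
  using frv by (simp add: fuzzy_random_variable_def)

lemma supp_X_measurable: "\<alpha> \<in> {0..1} \<Longrightarrow> (\<lambda>\<omega>. supp_fun (X \<omega>) u \<alpha>) \<in> borel_measurable M"
  by (rule supp_fun_measurable[OF frv])

definition abs_dev :: "real \<Rightarrow> real \<Rightarrow> real \<Rightarrow> ennreal" where
  "abs_dev u \<alpha> c = (\<integral>\<^sup>+\<omega>. \<bar>c - supp_fun (X \<omega>) u \<alpha>\<bar> \<partial>M)"

lemma Med_supp_X_iff:
  assumes "u \<in> {-1, 1}" "\<alpha> \<in> {0..1}"
  shows "c \<in> Med M (\<lambda>\<omega>. supp_fun (X \<omega>) u \<alpha>) \<longleftrightarrow> (\<forall>d. abs_dev u \<alpha> c \<le> abs_dev u \<alpha> d)"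
  unfolding abs_dev_def
  by (rule Med_iff_nn_abs_dev_minimal[OF supp_fun_integrable[OF frv integrably_bounded assms]])

lemma supp_X_measurable_pair:
  "(\<lambda>(\<omega>, \<alpha>). supp_fun (X \<omega>) u \<alpha>) \<in> borel_measurable (M \<Otimes>\<^sub>M lborel_0_1)"
proof (rule measurable_antimono_left_continuous)
  show "(\<lambda>\<omega>. supp_fun (X \<omega>) u \<alpha>) \<in> borel_measurable M" if "\<alpha> \<in> {0<..1}" for \<alpha>
    using that by (intro supp_X_measurable) auto
  show "supp_fun (X \<omega>) u \<gamma> \<le> supp_fun (X \<omega>) u \<beta>"
    if "\<omega> \<in> space M" "0 < \<beta>" "\<beta> \<le> \<gamma>" "\<gamma> \<le> 1" for \<omega> \<beta> \<gamma>
    using that by (intro supp_fun_antimono X_in_Fc) auto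
  show "continuous (at_left \<alpha>) (supp_fun (X \<omega>) u)" if "\<omega> \<in> space M" "\<alpha> \<in> {0<..1}" for \<omega> \<alpha>
    using that by (intro supp_fun_continuous_at_left X_in_Fc)
qed

lemma abs_dev_measurable_pair:
  assumes "U \<in> Fc"
  shows "(\<lambda>(\<omega>, \<alpha>). ennreal \<bar>supp_fun U u \<alpha> - supp_fun (X \<omega>) u \<alpha>\<bar>) \<in> borel_measurable (M \<Otimes>\<^sub>M lborel_0_1)"
proof -
  have "(\<lambda>x. supp_fun U u (snd x)) \<in> borel_measurable (M \<Otimes>\<^sub>M lborel_0_1)"
    using supp_fun_measurable_0_1[OF assms] by measurable
  moreover note supp_X_measurable_pair[of u]
  ultimately show ?thesis
    unfolding case_prod_beta by measurable
qed

lemma abs_dev_measurable: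
  assumes "U \<in> Fc"
  shows "(\<lambda>\<alpha>. abs_dev u \<alpha> (supp_fun U u \<alpha>)) \<in> borel_measurable lborel_0_1"
proof -
  have "(\<lambda>(\<alpha>, \<omega>). ennreal \<bar>supp_fun U u \<alpha> - supp_fun (X \<omega>) u \<alpha>\<bar>) \<in> borel_measurable (lborel_0_1 \<Otimes>\<^sub>M M)"
    using abs_dev_measurable_pair[OF assms] by (subst measurable_pair_swap_iff) simp
  then show ?thesis
    unfolding abs_dev_def by (rule borel_measurable_nn_integral)
qed

lemma expected_rho1:
  assumes U: "U \<in> Fc"
  shows "(\<integral>\<^sup>+\<omega>. rho1 U (X \<omega>) \<partial>M)
    = (\<Sum>u\<in>{-1, 1}. ennreal (1/2) * (\<integral>\<^sup>+\<alpha>. abs_dev u \<alpha> (supp_fun U u \<alpha>) \<partial>lborel_0_1))"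
proof -
  interpret L: prob_space lborel_0_1
    by (rule prob_space_lborel_0_1)
  interpret pair_sigma_finite M lborel_0_1
    by unfold_locales
  have "(\<integral>\<^sup>+\<omega>. rho1 U (X \<omega>) \<partial>M)
      = (\<integral>\<^sup>+\<omega>. (\<Sum>u\<in>{-1, 1}. ennreal (1/2) *
          (\<integral>\<^sup>+\<alpha>. \<bar>supp_fun U u \<alpha> - supp_fun (X \<omega>) u \<alpha>\<bar> \<partial>lborel_0_1)) \<partial>M)"
    using U X_in_Fc by (intro nn_integral_cong ennreal_rho1) auto
  also have "\<dots> = (\<Sum>u\<in>{-1, 1}. ennreal (1/2) *
      (\<integral>\<^sup>+\<omega>. (\<integral>\<^sup>+\<alpha>. \<bar>supp_fun U u \<alpha> - supp_fun (X \<omega>) u \<alpha>\<bar> \<partial>lborel_0_1) \<partial>M))"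
  proof -
    have [measurable]: "(\<lambda>\<omega>. \<integral>\<^sup>+\<alpha>. \<bar>supp_fun U u \<alpha> - supp_fun (X \<omega>) u \<alpha>\<bar> \<partial>lborel_0_1) \<in> borel_measurable M" for u
      by (rule L.borel_measurable_nn_integral[OF abs_dev_measurable_pair[OF U]])
    show ?thesis
      by (subst nn_integral_sum) (simp_all add: nn_integral_cmult)
  qed
  also have "\<dots> = (\<Sum>u\<in>{-1, 1}. ennreal (1/2) * (\<integral>\<^sup>+\<alpha>. abs_dev u \<alpha> (supp_fun U u \<alpha>) \<partial>lborel_0_1))"
    unfolding abs_dev_def using Fubini'[OF abs_dev_measurable_pair[OF U]] by simp
  finally show ?thesis .
qed

lemma Med_supp_X_of_AE:
  assumes U: "U \<in> Fc"
    and ae: "AE \<alpha> in lborel_0_1. supp_fun U u \<alpha> \<in> Med M (\<lambda>\<omega>. supp_fun (X \<omega>) u \<alpha>)"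
    and \<alpha>: "\<alpha> \<in> {0..1}"
  shows "supp_fun U u \<alpha> \<in> Med M (\<lambda>\<omega>. supp_fun (X \<omega>) u \<alpha>)"
proof -
  obtain \<beta> where \<beta>: "\<And>n. \<beta> n \<in> {0<..1}"
    "\<And>n. supp_fun U u (\<beta> n) \<in> Med M (\<lambda>\<omega>. supp_fun (X \<omega>) u (\<beta> n))"
    "\<And>A. A \<in> Fc \<Longrightarrow> (\<lambda>n. supp_fun A u (\<beta> n)) \<longlonglongrightarrow> supp_fun A u \<alpha>"
    using AE_lborel_0_1_approx[OF ae \<alpha>] by blast
  show ?thesis
  proof (rule Med_tendsto[where Y="\<lambda>n \<omega>. supp_fun (X \<omega>) u (\<beta> n)" and m="\<lambda>n. supp_fun U u (\<beta> n)"])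
    show "(\<lambda>\<omega>. supp_fun (X \<omega>) u (\<beta> n)) \<in> borel_measurable M" for n
      using \<beta>(1)[of n] by (intro supp_X_measurable) auto
  qed (use \<beta> U \<alpha> X_in_Fc supp_X_measurable in auto)
qed

definition largest_median_supp :: "real \<Rightarrow> real \<Rightarrow> real" where
  "largest_median_supp u \<alpha> = largest_median M (\<lambda>\<omega>. supp_fun (X \<omega>) u \<alpha>)"

lemma largest_median_supp_in_Med:
  "\<alpha> \<in> {0..1} \<Longrightarrow> largest_median_supp u \<alpha> \<in> Med M (\<lambda>\<omega>. supp_fun (X \<omega>) u \<alpha>)"
  unfolding largest_median_supp_def by (intro largest_median_in_Med supp_X_measurable)

lemma largest_median_supp_antimono:
  assumes "0 \<le> \<alpha>" "\<alpha> \<le> \<beta>" "\<beta> \<le> 1"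
  shows "largest_median_supp u \<beta> \<le> largest_median_supp u \<alpha>"
  unfolding largest_median_supp_def
  using assms by (intro largest_median_mono supp_X_measurable supp_fun_antimono X_in_Fc) auto

lemma largest_median_supp_lower_le_upper:
  assumes "\<alpha> \<in> {0..1}"
  shows "- largest_median_supp (-1) \<alpha> \<le> largest_median_supp 1 \<alpha>"
proof -
  have "- largest_median_supp 1 \<alpha> \<in> Med M (\<lambda>\<omega>. - supp_fun (X \<omega>) 1 \<alpha>)"
    using largest_median_supp_in_Med[OF assms] by (simp add: Med_uminus_iff)
  then have "- largest_median_supp 1 \<alpha> \<le> largest_median M (\<lambda>\<omega>. - supp_fun (X \<omega>) 1 \<alpha>)"
    using supp_X_measurable[OF assms] by (intro Med_le_largest_median) auto
  also have "\<dots> \<le> largest_median_supp (-1) \<alpha>"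
    unfolding largest_median_supp_def
    using assms supp_X_measurable[OF assms] supp_fun_lower_le_upper[OF X_in_Fc assms]
    by (intro largest_median_mono) (auto simp: add.commute minus_le_iff)
  finally show ?thesis
    by simp
qed

lemma largest_median_supp_continuous_at_left:
  assumes \<alpha>: "\<alpha> \<in> {0<..1}"
  shows "continuous (at_left \<alpha>) (largest_median_supp u)"
  unfolding continuous_within
proof (rule tendsto_at_left_sequentially[of 0])
  show "0 < \<alpha>"
    using \<alpha> by simp
  fix S :: "nat \<Rightarrow> real"
  assume S: "\<And>n. S n < \<alpha>" "\<And>n. 0 < S n" "incseq S" "S \<longlonglongrightarrow> \<alpha>"
  have S01: "S n \<in> {0..1}" for n
    using S(1,2)[of n] \<alpha> by auto
  have "decseq (\<lambda>n. largest_median_supp u (S n))"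
    unfolding decseq_def
  proof (intro allI impI)
    fix m n :: nat assume "m \<le> n"
    then show "largest_median_supp u (S n) \<le> largest_median_supp u (S m)"
      using S(1)[of n] S(2)[of m] S(3)[unfolded incseq_def] \<alpha>
      by (intro largest_median_supp_antimono) auto
  qed
  moreover have lower: "largest_median_supp u \<alpha> \<le> largest_median_supp u (S n)" for n
    using S(1,2)[of n] \<alpha> by (intro largest_median_supp_antimono) auto
  ultimately obtain L where L: "(\<lambda>n. largest_median_supp u (S n)) \<longlonglongrightarrow> L"
    using decseq_convergent by blast
  have S_lim: "filterlim S (at_left \<alpha>) sequentially"
    using S by (intro tendsto_imp_filterlim_at_left) auto
  have supp_lim: "(\<lambda>n. supp_fun (X \<omega>) u (S n)) \<longlonglongrightarrow> supp_fun (X \<omega>) u \<alpha>" if "\<omega> \<in> space M" for \<omega>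
    using filterlim_compose[OF supp_fun_continuous_at_left[OF X_in_Fc[OF that] \<alpha>, unfolded continuous_within] S_lim] .
  \<comment> \<open>The limit of the largest medians is a median at \<open>\<alpha>\<close>, hence at most the largest one.\<close>
  have "L \<in> Med M (\<lambda>\<omega>. supp_fun (X \<omega>) u \<alpha>)"
  proof (rule Med_tendsto[OF _ _ supp_lim L])
    show "largest_median_supp u (S n) \<in> Med M (\<lambda>\<omega>. supp_fun (X \<omega>) u (S n))" for n
      using S01 by (rule largest_median_supp_in_Med)
  qed (use S01 \<alpha> supp_X_measurable in auto)
  then have "L \<le> largest_median_supp u \<alpha>"
    unfolding largest_median_supp_def using \<alpha> by (intro Med_le_largest_median supp_X_measurable) auto
  moreover have "largest_median_supp u \<alpha> \<le> L"
    using L lower by (intro LIMSEQ_le_const) auto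
  ultimately show "(\<lambda>n. largest_median_supp u (S n)) \<longlonglongrightarrow> largest_median_supp u \<alpha>"
    using L by simp
qed

definition upper_support_median :: "real \<Rightarrow> real" where
  "upper_support_median = fuzzy_of_levels (\<lambda>\<alpha>. - largest_median_supp (-1) \<alpha>) (largest_median_supp 1)"

lemma largest_median_supp_nested:
  "0 \<le> \<beta> \<Longrightarrow> \<beta> \<le> \<gamma> \<Longrightarrow> \<gamma> \<le> 1 \<Longrightarrow>
    - largest_median_supp (-1) \<beta> \<le> - largest_median_supp (-1) \<gamma> \<and> largest_median_supp 1 \<gamma> \<le> largest_median_supp 1 \<beta>"
  by (simp add: largest_median_supp_antimono)

lemma upper_support_median_in_Fc: "upper_support_median \<in> Fc"
  unfolding upper_support_median_def
proof (rule fuzzy_of_levels_in_Fc)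
  show "- largest_median_supp (-1) \<alpha> \<le> largest_median_supp 1 \<alpha>" if "\<alpha> \<in> {0<..1}" for \<alpha>
    using that by (intro largest_median_supp_lower_le_upper) auto
  show "continuous (at_left \<alpha>) (\<lambda>\<alpha>. - largest_median_supp (-1) \<alpha>) \<and>
      continuous (at_left \<alpha>) (largest_median_supp 1)" if "\<alpha> \<in> {0<..1}" for \<alpha>
    using largest_median_supp_continuous_at_left[OF that] by (auto intro: continuous_minus)
qed (rule largest_median_supp_nested)

lemma supp_fun_upper_support_median:
  assumes u: "u \<in> {-1, 1}" and \<alpha>: "\<alpha> \<in> {0<..1}"
  shows "supp_fun upper_support_median u \<alpha> = largest_median_supp u \<alpha>"
proof -
  have "flevel upper_support_median \<alpha> = {- largest_median_supp (-1) \<alpha>..largest_median_supp 1 \<alpha>}"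
    unfolding upper_support_median_def
    using largest_median_supp_continuous_at_left[OF \<alpha>] \<alpha>
    by (intro flevel_fuzzy_of_levels largest_median_supp_nested continuous_minus) auto
  then show ?thesis
    using supp_fun_interval largest_median_supp_lower_le_upper[of \<alpha>] u \<alpha> by auto
qed

lemma abs_dev_upper_support_median_le:
  assumes u: "u \<in> {-1, 1}" and \<alpha>: "\<alpha> \<in> space lborel_0_1"
  shows "abs_dev u \<alpha> (supp_fun upper_support_median u \<alpha>) \<le> abs_dev u \<alpha> c"
proof -
  have "\<alpha> \<in> {0<..1}"
    using \<alpha> by simp
  then have "supp_fun upper_support_median u \<alpha> \<in> Med M (\<lambda>\<omega>. supp_fun (X \<omega>) u \<alpha>)"
    using supp_fun_upper_support_median[OF u] largest_median_supp_in_Med[of \<alpha> u] by simp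
  then show ?thesis
    using Med_supp_X_iff[OF u, of \<alpha>] \<open>\<alpha> \<in> {0<..1}\<close> by auto
qed

lemma Meds_subset_Med1: "Meds M X \<subseteq> Med1 M X"
proof
  fix U assume "U \<in> Meds M X"
  then have U: "U \<in> Fc"
    and med: "\<And>u \<alpha>. u \<in> {-1, 1} \<Longrightarrow> \<alpha> \<in> {0..1} \<Longrightarrow> supp_fun U u \<alpha> \<in> Med M (\<lambda>\<omega>. supp_fun (X \<omega>) u \<alpha>)"
    by (auto simp: Meds_def)
  have "(\<integral>\<^sup>+\<omega>. rho1 U (X \<omega>) \<partial>M) \<le> (\<integral>\<^sup>+\<omega>. rho1 V (X \<omega>) \<partial>M)" if V: "V \<in> Fc" for V
  proof -
    have "abs_dev u \<alpha> (supp_fun U u \<alpha>) \<le> abs_dev u \<alpha> (supp_fun V u \<alpha>)"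
      if "u \<in> {-1, 1}" "\<alpha> \<in> space lborel_0_1" for u \<alpha>
    proof -
      have "\<alpha> \<in> {0..1}"
        using that(2) by simp
      then show ?thesis
        using med[OF that(1)] Med_supp_X_iff[OF that(1)] by blast
    qed
    then show ?thesis
      unfolding expected_rho1[OF U] expected_rho1[OF V]
      by (intro sum_mono mult_left_mono nn_integral_mono) auto
  qed
  with U show "U \<in> Med1 M X"
    by (simp add: Med1_def)
qed

lemma nn_integral_abs_dev_finite:
  assumes U: "U \<in> Fc" and u: "u \<in> {-1, 1}"
  shows "(\<integral>\<^sup>+\<alpha>. abs_dev u \<alpha> (supp_fun U u \<alpha>) \<partial>lborel_0_1) < \<infinity>"
proof -
  define C where "C = ennreal (norm0 U) + (\<integral>\<^sup>+\<omega>. norm0 (X \<omega>) \<partial>M)"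
  have "abs_dev u \<alpha> (supp_fun U u \<alpha>) \<le> C" if "\<alpha> \<in> space lborel_0_1" for \<alpha>
  proof -
    have \<alpha>: "\<alpha> \<in> {0..1}"
      using that by simp
    have "abs_dev u \<alpha> (supp_fun U u \<alpha>)
        \<le> ennreal \<bar>supp_fun U u \<alpha>\<bar> + (\<integral>\<^sup>+\<omega>. \<bar>supp_fun (X \<omega>) u \<alpha>\<bar> \<partial>M)"
      unfolding abs_dev_def using \<alpha> by (intro nn_integral_abs_diff_le supp_X_measurable)
    also have "\<dots> \<le> C"
      unfolding C_def using abs_supp_fun_le_norm0[OF U u \<alpha>] abs_supp_fun_le_norm0[OF X_in_Fc u \<alpha>]
      by (intro add_mono ennreal_leI nn_integral_mono) auto
    finally show ?thesis .
  qed
  then have "(\<integral>\<^sup>+\<alpha>. abs_dev u \<alpha> (supp_fun U u \<alpha>) \<partial>lborel_0_1) \<le> (\<integral>\<^sup>+\<alpha>. C \<partial>lborel_0_1)"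
    by (intro nn_integral_mono)
  also have "\<dots> = C"
    by (simp add: emeasure_restrict_space)
  also have "\<dots> < \<infinity>"
    using integrably_bounded by (simp add: C_def)
  finally show ?thesis .
qed

lemma nn_integral_abs_dev_eq_of_optimal:
  assumes U: "U \<in> Fc"
    and opt: "(\<integral>\<^sup>+\<omega>. rho1 U (X \<omega>) \<partial>M) \<le> (\<integral>\<^sup>+\<omega>. rho1 upper_support_median (X \<omega>) \<partial>M)"
    and u: "u \<in> {-1, 1}"
  shows "(\<integral>\<^sup>+\<alpha>. abs_dev u \<alpha> (supp_fun U u \<alpha>) \<partial>lborel_0_1)
    = (\<integral>\<^sup>+\<alpha>. abs_dev u \<alpha> (supp_fun upper_support_median u \<alpha>) \<partial>lborel_0_1)"
proof -
  define I where "I V v = (\<integral>\<^sup>+\<alpha>. abs_dev v \<alpha> (supp_fun V v \<alpha>) \<partial>lborel_0_1)" for V v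
  have "ennreal (1/2) * I U u = ennreal (1/2) * I upper_support_median u"
  proof (rule ennreal_sum_le_sum_imp_eq[of "{-1, 1}"])
    show "(\<Sum>v\<in>{-1, 1}. ennreal (1/2) * I U v) \<le> (\<Sum>v\<in>{-1, 1}. ennreal (1/2) * I upper_support_median v)"
      using opt unfolding expected_rho1[OF U] expected_rho1[OF upper_support_median_in_Fc] I_def .
    show "(\<Sum>v\<in>{-1, 1}. ennreal (1/2) * I upper_support_median v) < \<infinity>"
      using nn_integral_abs_dev_finite[OF upper_support_median_in_Fc]
      by (simp add: I_def ennreal_mult_eq_top_iff less_top[symmetric])
    show "ennreal (1/2) * I upper_support_median v \<le> ennreal (1/2) * I U v" if "v \<in> {-1, 1}" for v
      unfolding I_def using abs_dev_upper_support_median_le[OF that]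
      by (intro mult_left_mono nn_integral_mono) auto
  qed (use u in auto)
  then show ?thesis
    by (simp add: I_def ennreal_mult_cancel_left)
qed

lemma Med1_subset_Meds: "Med1 M X \<subseteq> Meds M X"
proof
  fix U assume "U \<in> Med1 M X"
  then have U: "U \<in> Fc"
    and opt: "(\<integral>\<^sup>+\<omega>. rho1 U (X \<omega>) \<partial>M) \<le> (\<integral>\<^sup>+\<omega>. rho1 upper_support_median (X \<omega>) \<partial>M)"
    using upper_support_median_in_Fc by (auto simp: Med1_def)
  have "AE \<alpha> in lborel_0_1. supp_fun U u \<alpha> \<in> Med M (\<lambda>\<omega>. supp_fun (X \<omega>) u \<alpha>)"
    if u: "u \<in> {-1, 1}" for u
  proof -
    have "AE \<alpha> in lborel_0_1. abs_dev u \<alpha> (supp_fun U u \<alpha>) \<le> abs_dev u \<alpha> (supp_fun upper_support_median u \<alpha>)"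
    proof (rule ccontr)
      assume "\<not> ?thesis"
      with abs_dev_upper_support_median_le[OF u] nn_integral_abs_dev_finite[OF upper_support_median_in_Fc u]
      have "(\<integral>\<^sup>+\<alpha>. abs_dev u \<alpha> (supp_fun upper_support_median u \<alpha>) \<partial>lborel_0_1)
          < (\<integral>\<^sup>+\<alpha>. abs_dev u \<alpha> (supp_fun U u \<alpha>) \<partial>lborel_0_1)"
        by (intro nn_integral_less abs_dev_measurable upper_support_median_in_Fc U AE_I2) auto
      then show False
        using nn_integral_abs_dev_eq_of_optimal[OF U opt u] by simp
    qed
    then show ?thesis
    proof (rule AE_mp[OF _ AE_I2[OF impI]])
      fix \<alpha> assume "\<alpha> \<in> space lborel_0_1"
        "abs_dev u \<alpha> (supp_fun U u \<alpha>) \<le> abs_dev u \<alpha> (supp_fun upper_support_median u \<alpha>)"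
      then show "supp_fun U u \<alpha> \<in> Med M (\<lambda>\<omega>. supp_fun (X \<omega>) u \<alpha>)"
        using Med_supp_X_iff[OF u] abs_dev_upper_support_median_le[OF u] by (force intro: order_trans)
    qed
  qed
  then show "U \<in> Meds M X"
    unfolding Meds_def using U Med_supp_X_of_AE by blast
qed

end

theorem theorem4p2:
  fixes M :: "'a measure" and X :: "'a \<Rightarrow> real \<Rightarrow> real"
  assumes "prob_space M"
    and "fuzzy_random_variable M X"
    and "(\<integral>\<^sup>+\<omega>. ennreal (norm0 (X \<omega>)) \<partial>M) < \<infinity>"
  shows "Med1 M X = Meds M X"
proof -
  interpret integrably_bounded_frv M X
    using assms by (simp add: integrably_bounded_frv_def integrably_bounded_frv_axioms_def)
  show ?thesis
    using Med1_subset_Meds Meds_subset_Med1 by (rule subset_antisym)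
qed

end
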